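(* Let $g$ be a non-constant power series with non-negative coefficients and radius of convergence $R>0$, and let $f=e^g$, with fulcrum $F(s)=\ln f(e^s)=g(e^s)$ for real $s<\ln R$. Assume that $g$ is a clan and that $\lim_{t\uparrow R}g(t)=+\infty$. Then $$\lim_{s\uparrow\ln R}\frac{F^{(k)}(s)}{F''(s)^{k/2}}=0\quad\text{for every integer }k\ge3,$$ for every integer $m\ge1$ one has $\lim_{t\uparrow R}\mathbf{E}(\breve{X}_t^m)=\mathbf{E}(Z^m)$ where $Z$ is a standard normal random variable, and $f$ is Gaussian.
   Context: The class $\mathcal{K}$ consists of non-constant power series $h(z)=\sum_{n\ge0}a_nz^n$ with radius of convergence $R\in(0,+\infty]$, with $a_n\ge 0$ for all $n$ and $a_0>0$. For $h\in\mathcal{K}$ and $t\in(0,R)$, its Khinchin family consists of the random variables $X_t$ with $\mathbf{P}(X_t=n)=a_nt^n/h(t)$, $n\ge0$; $m_h(t)=\mathbf{E}(X_t)=th'(t)/h(t)$, $\sigma_h^2(t)=\mathbf{V}(X_t)=t\,m_h'(t)$, and $\breve{X}_t=(X_t-m_h(t))/\sigma_h(t)$. A power series $h\in\mathcal{K}$ is called a clan if $\lim_{t\uparrow R}\sigma_h(t)/m_h(t)=0$. Here $f=e^g\in\mathcal{K}$, $(X_t)$ denotes the Khinchin family of $f$, and $f$ is called Gaussian if $\breve{X}_t$ converges in distribution to a standard normal random variable as $t\uparrow R$ ($t\to+\infty$ if $R=+\infty$). *)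

theory Defs
  imports "HOL-Probability.Probability" "HOL-Computational_Algebra.Formal_Power_Series"
begin

definition ps :: "(nat \<Rightarrow> real) \<Rightarrow> real \<Rightarrow> real" where
  "ps a t = (\<Sum>n. a n * t ^ n)"

definition exp_coeffs :: "(nat \<Rightarrow> real) \<Rightarrow> nat \<Rightarrow> real" where
  "exp_coeffs b = fps_nth (fps_const (exp (b 0)) * (fps_exp 1 oo (Abs_fps b - fps_const (b 0))))"

definition upto :: "ereal \<Rightarrow> real filter" where
  "upto R = (if R = \<infinity> then at_top else at_left (real_of_ereal R))"

definition upto_ln :: "ereal \<Rightarrow> real filter" where
  "upto_ln R = (if R = \<infinity> then at_top else at_left (ln (real_of_ereal R)))"

definition kmean :: "(nat \<Rightarrow> real) \<Rightarrow> real \<Rightarrow> real" where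
  "kmean a t = t * deriv (ps a) t / ps a t"

definition kvar :: "(nat \<Rightarrow> real) \<Rightarrow> real \<Rightarrow> real" where
  "kvar a t = t * deriv (kmean a) t"

definition ksd :: "(nat \<Rightarrow> real) \<Rightarrow> real \<Rightarrow> real" where
  "ksd a t = sqrt (kvar a t)"

definition kprob :: "(nat \<Rightarrow> real) \<Rightarrow> real \<Rightarrow> nat \<Rightarrow> real" where
  "kprob a t n = a n * t ^ n / ps a t"

definition knorm_moment :: "(nat \<Rightarrow> real) \<Rightarrow> real \<Rightarrow> nat \<Rightarrow> real" where
  "knorm_moment a t m = (\<Sum>n. kprob a t n * ((real n - kmean a t) / ksd a t) ^ m)"

definition knorm_cdf :: "(nat \<Rightarrow> real) \<Rightarrow> real \<Rightarrow> real \<Rightarrow> real" where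
  "knorm_cdf a t x = (\<Sum>n. if (real n - kmean a t) / ksd a t \<le> x then kprob a t n else 0)"

definition in_K :: "(nat \<Rightarrow> real) \<Rightarrow> bool" where
  "in_K a \<longleftrightarrow> (\<forall>n. a n \<ge> 0) \<and> a 0 > 0 \<and> (\<exists>n>0. a n \<noteq> 0) \<and> conv_radius a > 0"

definition is_clan :: "(nat \<Rightarrow> real) \<Rightarrow> bool" where
  "is_clan a \<longleftrightarrow> ((\<lambda>t. ksd a t / kmean a t) \<longlongrightarrow> 0) (upto (conv_radius a))"

definition std_normal_cdf :: "real \<Rightarrow> real" where
  "std_normal_cdf x = measure std_normal_distribution {..x}"

text \<open>Gaussian: normalized X_t converges in distribution to N(0,1), i.e. the distribution
  functions converge at every point (all points are continuity points of the normal cdf).\<close>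
definition gaussian :: "(nat \<Rightarrow> real) \<Rightarrow> bool" where
  "gaussian a \<longleftrightarrow> (\<forall>x. ((\<lambda>t. knorm_cdf a t x) \<longlongrightarrow> std_normal_cdf x) (upto (conv_radius a)))"

end

theory Submission
  imports Defs "HOL-Analysis.FPS_Convergence"
begin

text \<open>Write \<open>a\<close> for the coefficients of \<open>f = e^g\<close> and \<open>\<theta> = x d/dx\<close>. Comparing coefficients
  in \<open>f' = g' f\<close> gives \<open>n a_n = \<Sum>_k k b_k a_(n-k)\<close>. Hence \<open>X_t\<close> has mean \<open>\<theta>g(t)\<close> and
  variance \<open>\<theta>^2 g(t)\<close>, and its central moments satisfy
  \<open>\<mu>_(j+1) = \<Sum>_(i=1..j) (j choose i) \<theta>^(i+1) g(t) \<mu>_(j-i)\<close>. After normalising by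
  \<open>\<sigma> = sqrt (\<theta>^2 g)\<close>, the coefficient \<open>\<theta>^k g / \<sigma>^k\<close> is \<open>1\<close> for \<open>k = 2\<close> and tends to
  \<open>0\<close> for \<open>k \<ge> 3\<close>, so in the limit the recursion becomes \<open>\<mu>_(j+1) = j \<mu>_(j-1)\<close>, that of the
  Gaussian moments.

  The decay comes from the clan condition: eventually \<open>\<sigma>_g \<le> m_g / 2\<close>, so along \<open>t = e^s\<close>
  the quantity \<open>1 / m_g\<close> decreases with slope at most \<open>1/4\<close>, and \<open>g\<close> grows at most by the
  factor \<open>e^(4/3)\<close> on \<open>[s, s + 1 / m_g(e^s)]\<close>. With \<open>n^k \<le> k! m^k e^(n/m)\<close> this gives
  \<open>\<theta>^k g \<le> k! e^(4/3) m_g^k g\<close>, while \<open>\<theta>^2 g \<ge> m_g^2 g\<close>; hence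
  \<open>\<theta>^k g / \<sigma>^k = O(g^(-(k-2)/2))\<close>, which tends to \<open>0\<close> because \<open>g\<close> tends to infinity. As
  \<open>F^(k)(s) = \<theta>^k g(e^s)\<close>, this is also the first claim.

  Finally, the normal law is determined by its moments: Taylor expansion of the characteristic
  functions turns convergence of all moments into convergence of characteristic functions, and
  Levy's continuity theorem into convergence of the distribution functions.\<close>

section \<open>The Euler operator on power series\<close>

text \<open>The name refers to the Euler operator \<open>\<theta> = x d/dx\<close>: \<open>theta_ps c j\<close> is \<open>\<theta>^j\<close> applied
  to \<open>ps c\<close>.\<close>
definition theta_ps :: "(nat \<Rightarrow> real) \<Rightarrow> nat \<Rightarrow> real \<Rightarrow> real" where
  "theta_ps c j x = (\<Sum>n. c n * real n ^ j * x ^ n)"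

lemma ps_eq_theta_ps_0: "ps c = theta_ps c 0"
  by (simp add: fun_eq_iff ps_def theta_ps_def)

lemma conv_radius_le_mult_of_nat: "conv_radius (c :: nat \<Rightarrow> real) \<le> conv_radius (\<lambda>n. c n * real n)"
proof -
  have "conv_radius c \<le> fps_conv_radius (fps_deriv (Abs_fps c))"
    using fps_conv_radius_deriv[of "Abs_fps c"] by (simp add: fps_conv_radius_def)
  also have "\<dots> = conv_radius (\<lambda>n. c (n + 1) * real (n + 1))"
    by (simp add: fps_conv_radius_def fps_deriv_nth mult.commute)
  also have "\<dots> = conv_radius (\<lambda>n. c n * real n)"
    using conv_radius_shift[of "\<lambda>n. c n * real n" 1] by simp
  finally show ?thesis .
qed

lemma conv_radius_le_mult_of_nat_power:
  "conv_radius (c :: nat \<Rightarrow> real) \<le> conv_radius (\<lambda>n. c n * real n ^ j)"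
proof (induction j)
  case (Suc j)
  with conv_radius_le_mult_of_nat[of "\<lambda>n. c n * real n ^ j"] show ?case
    by (simp add: mult.assoc mult.commute[of "real _"])
qed simp

context
  fixes c :: "nat \<Rightarrow> real" and x :: real
  assumes in_disc: "ereal \<bar>x\<bar> < conv_radius c"
begin

lemma norm_less_conv_radius_mult_of_nat_power: "ereal (norm x) < conv_radius (\<lambda>n. c n * real n ^ j)"
  using in_disc conv_radius_le_mult_of_nat_power[of c j] by auto

lemma summable_theta_ps: "summable (\<lambda>n. c n * real n ^ j * x ^ n)"
  using summable_in_conv_radius[OF norm_less_conv_radius_mult_of_nat_power] by simp

lemma summable_abs_theta_ps: "summable (\<lambda>n. \<bar>c n * real n ^ j * x ^ n\<bar>)"
  using abs_summable_in_conv_radius[OF norm_less_conv_radius_mult_of_nat_power] by simp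

lemma theta_ps_sums: "(\<lambda>n. c n * real n ^ j * x ^ n) sums theta_ps c j x"
  using summable_theta_ps by (simp add: theta_ps_def summable_sums)

lemma has_real_derivative_theta_ps_diffs:
  "(theta_ps c j has_real_derivative (\<Sum>n. diffs (\<lambda>n. c n * real n ^ j) n * x ^ n)) (at x)"
  using has_field_derivative_powser[OF norm_less_conv_radius_mult_of_nat_power[of j]]
  by (simp add: theta_ps_def[abs_def])

lemma isCont_theta_ps: "isCont (theta_ps c j) x"
  using DERIV_isCont[OF has_real_derivative_theta_ps_diffs] .

lemma has_real_derivative_theta_ps:
  assumes "x \<noteq> 0"
  shows "(theta_ps c j has_real_derivative theta_ps c (Suc j) x / x) (at x)"
proof -
  have "(\<lambda>n. c (Suc n) * real (Suc n) ^ Suc j * x ^ Suc n / x) sums (theta_ps c (Suc j) x / x)"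
    using sums_divide[OF theta_ps_sums[of "Suc j"], of x]
      sums_Suc_iff[where f="\<lambda>n. c n * real n ^ Suc j * x ^ n / x"] by simp
  moreover have "(\<lambda>n. c (Suc n) * real (Suc n) ^ Suc j * x ^ Suc n / x)
      = (\<lambda>n. diffs (\<lambda>n. c n * real n ^ j) n * x ^ n)"
    using assms by (auto simp: diffs_def field_simps)
  ultimately show ?thesis
    using has_real_derivative_theta_ps_diffs sums_unique by fastforce
qed

end

lemma has_real_derivative_theta_ps_exp:
  assumes "ereal (exp s) < conv_radius c"
  shows "((\<lambda>s. theta_ps c j (exp s)) has_real_derivative theta_ps c (Suc j) (exp s)) (at s)"
proof -
  have "((\<lambda>s. theta_ps c j (exp s)) has_real_derivative
      theta_ps c (Suc j) (exp s) / exp s * exp s) (at s)"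
    using DERIV_chain2[OF has_real_derivative_theta_ps DERIV_exp] assms by simp
  then show ?thesis by simp
qed

lemma theta_ps_0_at_0: "theta_ps c 0 0 = c 0"
  using sums_unique[OF sums_single[of 0 "\<lambda>_. c 0"]]
  by (simp add: theta_ps_def power_0_left if_distrib[where f="\<lambda>y. c _ * y"] cong: if_cong)

lemma theta_ps_nonneg:
  assumes "\<forall>n. 0 \<le> c n" "0 \<le> x" "ereal x < conv_radius c"
  shows "0 \<le> theta_ps c j x"
  unfolding theta_ps_def using assms summable_theta_ps[of x c j] by (intro suminf_nonneg) auto

lemma theta_ps_pos:
  assumes "\<forall>n. 0 \<le> c n" "0 < x" "ereal x < conv_radius c" "0 < c k" "0 < k \<or> j = 0"
  shows "0 < theta_ps c j x"
  unfolding theta_ps_def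
  by (rule suminf_pos2[of _ k]) (use assms summable_theta_ps[of x c j] in auto)

section \<open>The coefficients of \<open>e^g\<close>\<close>

lemma exp_coeffs_0 [simp]: "exp_coeffs b 0 = exp (b 0)"
  by (simp add: exp_coeffs_def)

text \<open>Coefficientwise form of \<open>f' = g' f\<close>.\<close>
lemma exp_coeffs_recurrence:
  "real n * exp_coeffs b n = (\<Sum>k\<le>n. real k * b k * exp_coeffs b (n - k))"
proof (cases n)
  case (Suc p)
  define H :: "real fps" where "H = Abs_fps b - fps_const (b 0)"
  define X where "X = fps_const (exp (b 0)) * (fps_exp 1 oo H)"
  have X: "exp_coeffs b = fps_nth X" by (simp add: exp_coeffs_def X_def H_def)
  have "fps_deriv X = fps_const (exp (b 0)) * ((fps_deriv (fps_exp 1) oo H) * fps_deriv H)"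
    by (simp add: X_def H_def fps_compose_deriv)
  also have "\<dots> = X * fps_deriv H" by (simp add: X_def mult_ac)
  finally have "fps_nth (fps_deriv X) p = fps_nth (X * fps_deriv H) p" by simp
  then have "real (Suc p) * fps_nth X (Suc p)
      = (\<Sum>i=0..p. fps_nth X i * (real (Suc (p - i)) * b (Suc (p - i))))"
    by (simp add: fps_mult_nth H_def algebra_simps)
  also have "\<dots> = (\<Sum>i<Suc p. fps_nth X (Suc p - Suc i) * (real (Suc i) * b (Suc i)))"
    by (subst sum.nat_diff_reindex[symmetric])
      (auto simp: atLeast0AtMost lessThan_Suc_atMost Suc_diff_le intro!: sum.cong)
  also have "\<dots> = (\<Sum>k\<le>Suc p. real k * b k * fps_nth X (Suc p - k))"
    by (subst sum.atMost_Suc_shift) (simp add: lessThan_Suc_atMost mult_ac)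
  finally show ?thesis using Suc X by simp
qed simp

lemma exp_coeffs_nonneg:
  assumes "\<forall>n. 0 \<le> b n"
  shows "0 \<le> exp_coeffs b n"
proof (induction n rule: less_induct)
  case (less n)
  have "0 \<le> (\<Sum>k\<le>n. real k * b k * exp_coeffs b (n - k))"
  proof (intro sum_nonneg)
    fix k assume "k \<in> {..n}"
    then show "0 \<le> real k * b k * exp_coeffs b (n - k)"
      using less[of "n - k"] assms by (cases k) auto
  qed
  then have "0 \<le> real n * exp_coeffs b n" by (simp add: exp_coeffs_recurrence)
  then show ?case by (cases n) (auto simp: zero_le_mult_iff)
qed

lemma exp_coeffs_ge:
  assumes nonneg: "\<forall>n. 0 \<le> b n" and "1 \<le> n"
  shows "exp (b 0) * b n \<le> exp_coeffs b n"
proof -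
  have "real n * (b n * exp_coeffs b 0) \<le> (\<Sum>k\<le>n. real k * b k * exp_coeffs b (n - k))"
    using member_le_sum[of n "{..n}" "\<lambda>k. real k * b k * exp_coeffs b (n - k)"]
      exp_coeffs_nonneg[OF nonneg] nonneg by (auto simp: mult_ac)
  then have "real n * (b n * exp_coeffs b 0) \<le> real n * exp_coeffs b n"
    by (simp add: exp_coeffs_recurrence)
  with \<open>1 \<le> n\<close> show ?thesis by (simp add: mult_ac)
qed

lemma sum_convolution_le_product:
  fixes u v :: "nat \<Rightarrow> real"
  assumes "\<And>k. 0 \<le> u k" "\<And>k. 0 \<le> v k"
  shows "(\<Sum>n\<le>N. \<Sum>k\<le>n. u k * v (n - k)) \<le> (\<Sum>k\<le>N. u k) * (\<Sum>l\<le>N. v l)"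
proof -
  have "(\<Sum>n\<le>N. \<Sum>k\<le>n. u k * v (n - k)) = (\<Sum>(i,j)\<in>{(i,j). i + j \<le> N}. u i * v j)"
    by (rule sum.triangle_reindex_eq[symmetric])
  also have "\<dots> \<le> (\<Sum>(i,j)\<in>{..N} \<times> {..N}. u i * v j)"
    by (rule sum_mono2) (auto intro!: mult_nonneg_nonneg assms)
  also have "\<dots> = (\<Sum>k\<le>N. u k) * (\<Sum>l\<le>N. v l)"
    by (simp add: sum_product sum.cartesian_product)
  finally show ?thesis .
qed

lemma theta_partial_sum_exp_coeffs_le:
  assumes nonneg: "\<forall>n. 0 \<le> b n" and y: "0 \<le> y" "ereal y < conv_radius b"
  shows "(\<Sum>n\<le>N. real n * exp_coeffs b n * y ^ n)
    \<le> theta_ps b 1 y * (\<Sum>n\<le>N. exp_coeffs b n * y ^ n)"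
proof -
  let ?a = "exp_coeffs b"
  have "real n * ?a n * y ^ n = (\<Sum>k\<le>n. (real k * b k * y ^ k) * (?a (n - k) * y ^ (n - k)))"
    for n
  proof -
    have "real n * ?a n * y ^ n = (\<Sum>k\<le>n. real k * b k * ?a (n - k) * y ^ n)"
      by (simp add: exp_coeffs_recurrence sum_distrib_right)
    also have "\<dots> = (\<Sum>k\<le>n. (real k * b k * y ^ k) * (?a (n - k) * y ^ (n - k)))"
      by (intro sum.cong refl) (auto simp: power_add[symmetric] mult_ac)
    finally show ?thesis .
  qed
  then have "(\<Sum>n\<le>N. real n * ?a n * y ^ n)
      = (\<Sum>n\<le>N. \<Sum>k\<le>n. (real k * b k * y ^ k) * (?a (n - k) * y ^ (n - k)))"
    by simp
  also have "\<dots> \<le> (\<Sum>k\<le>N. real k * b k * y ^ k) * (\<Sum>l\<le>N. ?a l * y ^ l)"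
    by (rule sum_convolution_le_product) (use nonneg exp_coeffs_nonneg[OF nonneg] y in auto)
  also have "\<dots> \<le> theta_ps b 1 y * (\<Sum>l\<le>N. ?a l * y ^ l)"
  proof (intro mult_right_mono sum_nonneg)
    show "(\<Sum>k\<le>N. real k * b k * y ^ k) \<le> theta_ps b 1 y"
      unfolding theta_ps_def
      using sum_le_suminf[OF summable_theta_ps[of y b 1], of "{..N}"] nonneg y
      by (simp add: mult_ac)
  qed (use exp_coeffs_nonneg[OF nonneg] y in auto)
  finally show ?thesis .
qed

text \<open>The partial sum \<open>P\<close> satisfies \<open>\<theta>P \<le> (\<theta>g) P\<close>, so \<open>P e^(-g)\<close> is non-increasing on
  \<open>[0, x]\<close>.\<close>
lemma partial_sum_exp_coeffs_le:
  assumes nonneg: "\<forall>n. 0 \<le> b n" and x: "0 \<le> x" "ereal x < conv_radius b"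
  shows "(\<Sum>n\<le>N. exp_coeffs b n * x ^ n) \<le> exp (ps b x)"
proof -
  define P where "P y = (\<Sum>n\<le>N. exp_coeffs b n * y ^ n)" for y
  define Q where "Q y = P y * exp (- theta_ps b 0 y)" for y
  have in_disc: "ereal \<bar>y\<bar> < conv_radius b" if "0 \<le> y" "y \<le> x" for y
    using that x by (auto intro: order_le_less_trans[of "ereal y" "ereal x"])
  have "Q x \<le> Q 0"
  proof (rule DERIV_nonpos_imp_decreasing_open[OF x(1)])
    show "continuous_on {0..x} Q"
      unfolding Q_def P_def
      by (intro continuous_at_imp_continuous_on ballI continuous_intros
          isCont_o2[where g=exp] isCont_minus isCont_theta_ps in_disc) auto
  next
    fix y assume y: "0 < y" "y < x"
    define P' where "P' = (\<Sum>n\<le>N. exp_coeffs b n * (real n * y ^ (n - 1)))"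
    have "(P has_real_derivative P') (at y)"
      unfolding P_def P'_def by (auto intro!: derivative_eq_intros sum.cong)
    moreover have "((\<lambda>y. exp (- theta_ps b 0 y)) has_real_derivative
        exp (- theta_ps b 0 y) * - (theta_ps b 1 y / y)) (at y)"
      using has_real_derivative_theta_ps[OF in_disc, of y 0] y
      by (auto intro!: derivative_eq_intros)
    ultimately have "(Q has_real_derivative
        P' * exp (- theta_ps b 0 y) + exp (- theta_ps b 0 y) * - (theta_ps b 1 y / y) * P y) (at y)"
      unfolding Q_def by (rule DERIV_mult)
    moreover have "P' * y \<le> theta_ps b 1 y * P y"
    proof -
      have "P' * y = (\<Sum>n\<le>N. real n * exp_coeffs b n * y ^ n)"
        unfolding P'_def sum_distrib_right
        by (intro sum.cong refl) (auto simp: power_eq_if)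
      then show ?thesis
        using theta_partial_sum_exp_coeffs_le[OF nonneg, of y N] in_disc[of y] y
        by (simp add: P_def)
    qed
    then have "P' * exp (- theta_ps b 0 y) + exp (- theta_ps b 0 y) * - (theta_ps b 1 y / y) * P y \<le> 0"
      using y by (simp add: field_simps)
    ultimately show "\<exists>D. (Q has_real_derivative D) (at y) \<and> D \<le> 0" by blast
  qed
  moreover have "Q 0 = 1"
    by (simp add: Q_def P_def theta_ps_0_at_0 power_0_left exp_minus if_distrib cong: if_cong)
  ultimately show ?thesis by (simp add: Q_def P_def ps_eq_theta_ps_0 exp_minus field_simps)
qed

lemma conv_radius_exp_coeffs:
  assumes nonneg: "\<forall>n. 0 \<le> b n"
  shows "conv_radius (exp_coeffs b) = conv_radius b"
proof (rule antisym; rule conv_radius_geI_ex')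
  fix r :: real assume r: "0 < r" "ereal r < conv_radius (exp_coeffs b)"
  have "summable (\<lambda>n. exp (- b 0) * (exp_coeffs b n * r ^ n))"
    by (intro summable_mult summable_in_conv_radius) (use r in auto)
  then have "summable (\<lambda>n. b n * r ^ n)"
  proof (rule summable_comparison_test'[where N=1])
    fix n :: nat assume "1 \<le> n"
    then have "b n \<le> exp (- b 0) * exp_coeffs b n"
      using exp_coeffs_ge[OF nonneg] by (simp add: exp_minus field_simps)
    then show "norm (b n * r ^ n) \<le> exp (- b 0) * (exp_coeffs b n * r ^ n)"
      using nonneg r by (simp add: mult_right_mono mult.assoc)
  qed
  then show "summable (\<lambda>n. b n * of_real r ^ n)" by simp
next
  fix r :: real assume r: "0 < r" "ereal r < conv_radius b"
  have "summable (\<lambda>n. exp_coeffs b n * r ^ n)"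
  proof (rule summableI_nonneg_bounded[where x="exp (ps b r)"])
    fix n
    have "(\<Sum>i<n. exp_coeffs b i * r ^ i) \<le> (\<Sum>i\<le>n. exp_coeffs b i * r ^ i)"
      by (rule sum_mono2) (use exp_coeffs_nonneg[OF nonneg] r in auto)
    also have "\<dots> \<le> exp (ps b r)" using partial_sum_exp_coeffs_le[OF nonneg] r by simp
    finally show "(\<Sum>i<n. exp_coeffs b i * r ^ i) \<le> exp (ps b r)" .
  qed (use exp_coeffs_nonneg[OF nonneg] r in auto)
  then show "summable (\<lambda>n. exp_coeffs b n * of_real r ^ n)" by simp
qed

section \<open>Moments of the Khinchin family of \<open>e^g\<close>\<close>

definition centered_ps :: "(nat \<Rightarrow> real) \<Rightarrow> nat \<Rightarrow> real \<Rightarrow> real \<Rightarrow> real" where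
  "centered_ps c j m x = (\<Sum>n. c n * (real n - m) ^ j * x ^ n)"

lemma centered_ps_0: "centered_ps c 0 m x = ps c x"
  by (simp add: centered_ps_def ps_def)

lemma summable_abs_centered_ps:
  assumes "ereal \<bar>x\<bar> < conv_radius c"
  shows "summable (\<lambda>n. \<bar>c n * (real n - m) ^ j * x ^ n\<bar>)"
proof (rule summable_comparison_test')
  show "summable (\<lambda>n. \<Sum>i\<le>j. real (j choose i) * \<bar>m\<bar> ^ (j - i) * \<bar>c n * real n ^ i * x ^ n\<bar>)"
    by (intro summable_sum summable_mult summable_abs_theta_ps assms)
  fix n
  have "\<bar>real n - m\<bar> ^ j \<le> (real n + \<bar>m\<bar>) ^ j"
    by (intro power_mono) auto
  also have "\<dots> = (\<Sum>i\<le>j. real (j choose i) * real n ^ i * \<bar>m\<bar> ^ (j - i))"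
    by (rule binomial_ring)
  finally have "\<bar>c n\<bar> * \<bar>x\<bar> ^ n * \<bar>real n - m\<bar> ^ j
      \<le> \<bar>c n\<bar> * \<bar>x\<bar> ^ n * (\<Sum>i\<le>j. real (j choose i) * real n ^ i * \<bar>m\<bar> ^ (j - i))"
    by (intro mult_left_mono) auto
  then show "norm \<bar>c n * (real n - m) ^ j * x ^ n\<bar>
      \<le> (\<Sum>i\<le>j. real (j choose i) * \<bar>m\<bar> ^ (j - i) * \<bar>c n * real n ^ i * x ^ n\<bar>)"
    by (simp add: sum_distrib_left abs_mult power_abs mult_ac)
qed

lemma centered_ps_sums:
  assumes "ereal \<bar>x\<bar> < conv_radius c"
  shows "(\<lambda>n. c n * (real n - m) ^ j * x ^ n) sums centered_ps c j m x"
  unfolding centered_ps_def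
  using summable_rabs_cancel[OF summable_abs_centered_ps[OF assms]] by (rule summable_sums)

text \<open>Multiply \<open>n a_n = \<Sum>_k k b_k a_(n-k)\<close> by \<open>(n - m)^j = (k + (n - k - m))^j\<close> and expand
  binomially.\<close>
lemma exp_coeffs_binomial_convolution:
  "(\<Sum>i\<le>j. real (j choose i) * (\<Sum>k\<le>n. (b k * real k ^ Suc i * x ^ k)
      * (exp_coeffs b (n - k) * (real (n - k) - m) ^ (j - i) * x ^ (n - k))))
    = exp_coeffs b n * real n * (real n - m) ^ j * x ^ n"
proof -
  let ?a = "exp_coeffs b"
  have "(\<Sum>i\<le>j. real (j choose i) * (\<Sum>k\<le>n. (b k * real k ^ Suc i * x ^ k)
        * (?a (n - k) * (real (n - k) - m) ^ (j - i) * x ^ (n - k))))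
      = (\<Sum>k\<le>n. real k * b k * ?a (n - k) * x ^ n *
          (\<Sum>i\<le>j. real (j choose i) * real k ^ i * (real (n - k) - m) ^ (j - i)))"
    unfolding sum_distrib_left
  proof (subst sum.swap, intro sum.cong refl)
    fix k i assume "k \<in> {..n}"
    then have "x ^ n = x ^ k * x ^ (n - k)" by (simp add: power_add[symmetric])
    then show "real (j choose i) * ((b k * real k ^ Suc i * x ^ k)
        * (?a (n - k) * (real (n - k) - m) ^ (j - i) * x ^ (n - k)))
      = real k * b k * ?a (n - k) * x ^ n *
        (real (j choose i) * real k ^ i * (real (n - k) - m) ^ (j - i))"
      by (simp add: mult_ac)
  qed
  also have "\<dots> = (\<Sum>k\<le>n. real k * b k * ?a (n - k) * x ^ n * (real n - m) ^ j)"
    by (intro sum.cong refl) (auto simp: binomial_ring[symmetric] of_nat_diff)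
  also have "\<dots> = (\<Sum>k\<le>n. real k * b k * ?a (n - k)) * x ^ n * (real n - m) ^ j"
    by (simp add: sum_distrib_right)
  also have "\<dots> = ?a n * real n * (real n - m) ^ j * x ^ n"
    using exp_coeffs_recurrence[of n b] by (simp add: mult_ac)
  finally show ?thesis .
qed

lemma exp_coeffs_theta_centered_sums:
  assumes nonneg: "\<forall>n. 0 \<le> b n" and x: "ereal \<bar>x\<bar> < conv_radius b"
  shows "(\<lambda>n. exp_coeffs b n * real n * (real n - m) ^ j * x ^ n) sums
    (\<Sum>i\<le>j. real (j choose i) * (theta_ps b (Suc i) x * centered_ps (exp_coeffs b) (j - i) m x))"
proof -
  let ?a = "exp_coeffs b"
  define u where "u i k = b k * real k ^ Suc i * x ^ k" for i k
  define v where "v i l = ?a l * (real l - m) ^ (j - i) * x ^ l" for i l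
  have "(\<lambda>n. \<Sum>k\<le>n. u i k * v i (n - k)) sums (theta_ps b (Suc i) x * centered_ps ?a (j - i) m x)"
    for i
  proof -
    have "(\<lambda>n. \<Sum>k\<le>n. u i k * v i (n - k)) sums ((\<Sum>k. u i k) * (\<Sum>k. v i k))"
    proof (rule Cauchy_product_sums)
      show "summable (\<lambda>k. norm (u i k))"
        unfolding u_def real_norm_def by (rule summable_abs_theta_ps[OF x])
      show "summable (\<lambda>k. norm (v i k))"
        unfolding v_def real_norm_def
        by (rule summable_abs_centered_ps) (use x conv_radius_exp_coeffs[OF nonneg] in simp)
    qed
    then show ?thesis unfolding u_def v_def theta_ps_def centered_ps_def .
  qed
  then have "(\<lambda>n. \<Sum>i\<le>j. real (j choose i) * (\<Sum>k\<le>n. u i k * v i (n - k))) sums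
      (\<Sum>i\<le>j. real (j choose i) * (theta_ps b (Suc i) x * centered_ps ?a (j - i) m x))"
    by (intro sums_sum sums_mult)
  then show ?thesis unfolding u_def v_def exp_coeffs_binomial_convolution .
qed

lemma theta_ps_exp_coeffs:
  assumes nonneg: "\<forall>n. 0 \<le> b n" and x: "ereal \<bar>x\<bar> < conv_radius b"
  shows "theta_ps (exp_coeffs b) 1 x = theta_ps b 1 x * ps (exp_coeffs b) x"
proof -
  have "(\<lambda>n. exp_coeffs b n * real n ^ 1 * x ^ n) sums (theta_ps b 1 x * ps (exp_coeffs b) x)"
    using exp_coeffs_theta_centered_sums[OF assms, of 0 0] by (simp add: centered_ps_0)
  then show ?thesis by (simp add: theta_ps_def sums_iff)
qed

text \<open>Since \<open>\<theta>g(x)\<close> is the mean of \<open>X_x\<close>, this is the recursion of the central moments of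
  \<open>X_x\<close>, up to the factor \<open>f(x)\<close>.\<close>
lemma centered_ps_exp_coeffs_Suc:
  assumes nonneg: "\<forall>n. 0 \<le> b n" and x: "ereal \<bar>x\<bar> < conv_radius b"
  defines "m \<equiv> theta_ps b 1 x"
  shows "centered_ps (exp_coeffs b) (Suc j) m x
    = (\<Sum>i\<in>{1..j}. real (j choose i) * (theta_ps b (Suc i) x * centered_ps (exp_coeffs b) (j - i) m x))"
proof -
  let ?a = "exp_coeffs b"
  have a_disc: "ereal \<bar>x\<bar> < conv_radius ?a"
    using x conv_radius_exp_coeffs[OF nonneg] by simp
  have "(\<lambda>n. ?a n * (real n - m) ^ Suc j * x ^ n + m * (?a n * (real n - m) ^ j * x ^ n)) sums
      (centered_ps ?a (Suc j) m x + m * centered_ps ?a j m x)"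
    by (intro sums_add sums_mult centered_ps_sums a_disc)
  moreover have "(\<lambda>n. ?a n * (real n - m) ^ Suc j * x ^ n + m * (?a n * (real n - m) ^ j * x ^ n))
      = (\<lambda>n. ?a n * real n * (real n - m) ^ j * x ^ n)"
    by (auto simp: fun_eq_iff algebra_simps)
  ultimately have "centered_ps ?a (Suc j) m x + m * centered_ps ?a j m x
      = (\<Sum>i\<le>j. real (j choose i) * (theta_ps b (Suc i) x * centered_ps ?a (j - i) m x))"
    using sums_unique2[OF _ exp_coeffs_theta_centered_sums[OF assms(1,2)]] by simp
  also have "\<dots> = real (j choose 0) * (theta_ps b (Suc 0) x * centered_ps ?a (j - 0) m x)
      + (\<Sum>i\<in>{Suc 0..j}. real (j choose i) * (theta_ps b (Suc i) x * centered_ps ?a (j - i) m x))"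
    unfolding atMost_atLeast0 by (rule sum.atLeast_Suc_atMost) simp
  also have "real (j choose 0) * (theta_ps b (Suc 0) x * centered_ps ?a (j - 0) m x)
      = m * centered_ps ?a j m x"
    by (simp add: m_def)
  finally show ?thesis by simp
qed

lemma eventually_nhds_pos_in_disc:
  assumes "0 < t" "ereal t < r"
  shows "eventually (\<lambda>y. 0 < y \<and> ereal y < r) (nhds t)"
proof -
  have "open {y::real. 0 < y}" "open {y::real. ereal y < r}"
    by (auto intro!: open_Collect_less continuous_intros continuous_on_ereal)
  then have "open {y::real. 0 < y \<and> ereal y < r}"
    by (simp add: Collect_conj_eq open_Int)
  from eventually_nhds_in_open[OF this] show ?thesis using assms by simp
qed

lemma kmean_eq_theta_ps:
  assumes "0 < t" "ereal t < conv_radius c"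
  shows "kmean c t = theta_ps c 1 t / ps c t"
  using DERIV_imp_deriv[OF has_real_derivative_theta_ps[of t c 0]] assms
  by (simp add: kmean_def ps_eq_theta_ps_0)

lemma knorm_moment_eq_centered_ps:
  assumes "ereal \<bar>t\<bar> < conv_radius c"
  shows "knorm_moment c t j = centered_ps c j (kmean c t) t / (ps c t * ksd c t ^ j)"
  unfolding knorm_moment_def kprob_def centered_ps_def
  using suminf_divide[OF summable_rabs_cancel[OF summable_abs_centered_ps[OF assms]]]
  by (simp add: power_divide times_divide_times_eq mult_ac)

context
  fixes b :: "nat \<Rightarrow> real"
  assumes nonneg: "\<forall>n. 0 \<le> b n"
begin

context
  fixes t :: real
  assumes t: "0 < t" "ereal t < conv_radius b"
begin

lemma exp_coeffs_in_disc: "ereal \<bar>t\<bar> < conv_radius (exp_coeffs b)"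
  using t by (simp add: conv_radius_exp_coeffs[OF nonneg])

lemma ps_exp_coeffs_pos: "0 < ps (exp_coeffs b) t"
  unfolding ps_eq_theta_ps_0
  by (rule theta_ps_pos[where k=0]) (use t exp_coeffs_in_disc exp_coeffs_nonneg[OF nonneg] in auto)

lemma kmean_exp_coeffs: "kmean (exp_coeffs b) t = theta_ps b 1 t"
  using ps_exp_coeffs_pos theta_ps_exp_coeffs[OF nonneg] exp_coeffs_in_disc t
  by (simp add: kmean_eq_theta_ps)

end

lemma kvar_exp_coeffs:
  assumes t: "0 < t" "ereal t < conv_radius b"
  shows "kvar (exp_coeffs b) t = theta_ps b 2 t"
proof -
  have "eventually (\<lambda>y. kmean (exp_coeffs b) y = theta_ps b 1 y) (nhds t)"
    using eventually_nhds_pos_in_disc[OF t] by eventually_elim (use kmean_exp_coeffs in blast)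
  then have "deriv (kmean (exp_coeffs b)) t = deriv (theta_ps b 1) t"
    by (rule deriv_cong_ev) simp
  also have "\<dots> = theta_ps b 2 t / t"
    using has_real_derivative_theta_ps[of t b 1] t by (simp add: DERIV_imp_deriv numeral_2_eq_2)
  finally show ?thesis using t by (simp add: kvar_def)
qed

lemma knorm_moment_exp_coeffs:
  assumes t: "0 < t" "ereal t < conv_radius b"
  shows "knorm_moment (exp_coeffs b) t j
    = centered_ps (exp_coeffs b) j (theta_ps b 1 t) t / (ps (exp_coeffs b) t * sqrt (theta_ps b 2 t) ^ j)"
  using knorm_moment_eq_centered_ps[OF exp_coeffs_in_disc[OF t]] kmean_exp_coeffs[OF t]
    kvar_exp_coeffs[OF t] by (simp add: ksd_def)

lemma knorm_moment_exp_coeffs_0: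
  assumes t: "0 < t" "ereal t < conv_radius b"
  shows "knorm_moment (exp_coeffs b) t 0 = 1"
  using ps_exp_coeffs_pos[OF t] by (simp add: knorm_moment_exp_coeffs[OF t] centered_ps_0)

lemma knorm_moment_exp_coeffs_Suc:
  assumes t: "0 < t" "ereal t < conv_radius b" and "0 < theta_ps b 2 t"
  shows "knorm_moment (exp_coeffs b) t (Suc j) = (\<Sum>i\<in>{1..j}. real (j choose i)
    * (theta_ps b (Suc i) t / sqrt (theta_ps b 2 t) ^ Suc i) * knorm_moment (exp_coeffs b) t (j - i))"
proof -
  let ?a = "exp_coeffs b" and ?m = "theta_ps b 1 t" and ?\<sigma> = "sqrt (theta_ps b 2 t)"
  have "knorm_moment ?a t (Suc j) = centered_ps ?a (Suc j) ?m t / (ps ?a t * ?\<sigma> ^ Suc j)"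
    by (rule knorm_moment_exp_coeffs[OF t])
  also have "\<dots> = (\<Sum>i\<in>{1..j}. real (j choose i)
      * (theta_ps b (Suc i) t * centered_ps ?a (j - i) ?m t)) / (ps ?a t * ?\<sigma> ^ Suc j)"
    using centered_ps_exp_coeffs_Suc[OF nonneg] t by simp
  also have "\<dots> = (\<Sum>i\<in>{1..j}. real (j choose i) * (theta_ps b (Suc i) t / ?\<sigma> ^ Suc i)
      * (centered_ps ?a (j - i) ?m t / (ps ?a t * ?\<sigma> ^ (j - i))))"
    unfolding sum_divide_distrib
  proof (intro sum.cong refl)
    fix i assume "i \<in> {1..j}"
    then have "?\<sigma> ^ Suc j = ?\<sigma> ^ Suc i * ?\<sigma> ^ (j - i)" by (simp add: power_add[symmetric])
    then show "real (j choose i) * (theta_ps b (Suc i) t * centered_ps ?a (j - i) ?m t)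
        / (ps ?a t * ?\<sigma> ^ Suc j) = real (j choose i) * (theta_ps b (Suc i) t / ?\<sigma> ^ Suc i)
        * (centered_ps ?a (j - i) ?m t / (ps ?a t * ?\<sigma> ^ (j - i)))"
      using assms ps_exp_coeffs_pos[OF t] by (simp add: field_simps)
  qed
  finally show ?thesis by (simp add: knorm_moment_exp_coeffs[OF t])
qed

end

locale nonneg_nonconst_ps =
  fixes b :: "nat \<Rightarrow> real"
  assumes nonneg: "\<forall>n. 0 \<le> b n" and nonconst: "\<exists>n>0. b n \<noteq> 0"
    and radius: "0 < conv_radius b"
begin

context
  fixes t :: real
  assumes t: "0 < t" "ereal t < conv_radius b"
begin

lemma theta_ps_pos_nonconst: "0 < theta_ps b j t"
proof -
  obtain n0 where "0 < n0" "b n0 \<noteq> 0" using nonconst by blast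
  moreover from this have "0 < b n0" using nonneg by (metis order_le_neq_trans)
  ultimately show ?thesis using nonneg t by (intro theta_ps_pos[where k=n0]) auto
qed

lemma kmean_pos: "0 < kmean b t"
  using theta_ps_pos_nonconst t by (simp add: kmean_eq_theta_ps ps_eq_theta_ps_0)

lemma kmean_has_real_derivative: "(kmean b has_real_derivative kvar b t / t) (at t)"
proof -
  have "theta_ps b 0 t \<noteq> 0" using theta_ps_pos_nonconst[of 0] by simp
  then obtain D where quotient: "((\<lambda>y. theta_ps b 1 y / theta_ps b 0 y) has_real_derivative D) (at t)"
    using DERIV_divide[OF has_real_derivative_theta_ps[of t b 1] has_real_derivative_theta_ps[of t b 0]]
      t by fastforce
  have "eventually (\<lambda>y. kmean b y = theta_ps b 1 y / theta_ps b 0 y) (nhds t)"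
    using eventually_nhds_pos_in_disc[OF t]
    by eventually_elim (use kmean_eq_theta_ps ps_eq_theta_ps_0 in metis)
  from iffD2[OF DERIV_cong_ev[OF refl this refl] quotient]
  have deriv: "(kmean b has_real_derivative D) (at t)" .
  moreover have "kvar b t / t = D"
    using t by (simp add: kvar_def DERIV_imp_deriv[OF deriv])
  ultimately show ?thesis by simp
qed

text \<open>The variance of the Khinchin family of \<open>g\<close> is non-negative.\<close>
lemma kmean_sq_mult_ps_le: "kmean b t ^ 2 * ps b t \<le> theta_ps b 2 t"
proof -
  define m where "m = kmean b t"
  have m: "m * theta_ps b 0 t = theta_ps b 1 t"
    using theta_ps_pos_nonconst[of 0] t by (simp add: m_def kmean_eq_theta_ps ps_eq_theta_ps_0)
  have in_disc: "ereal \<bar>t\<bar> < conv_radius b" using t by simp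
  have sums: "(\<lambda>n. b n * real n ^ 2 * t ^ n - 2 * m * (b n * real n ^ 1 * t ^ n)
      + m\<^sup>2 * (b n * real n ^ 0 * t ^ n)) sums
      (theta_ps b 2 t - 2 * m * theta_ps b 1 t + m\<^sup>2 * theta_ps b 0 t)"
    by (intro sums_add sums_diff sums_mult theta_ps_sums in_disc)
  have "0 \<le> theta_ps b 2 t - 2 * m * theta_ps b 1 t + m\<^sup>2 * theta_ps b 0 t"
  proof (rule sums_le[OF _ sums_zero sums])
    fix n
    have "b n * real n ^ 2 * t ^ n - 2 * m * (b n * real n ^ 1 * t ^ n)
        + m\<^sup>2 * (b n * real n ^ 0 * t ^ n) = b n * t ^ n * (real n - m)\<^sup>2"
      by (simp add: power2_eq_square algebra_simps)
    then show "0 \<le> b n * real n ^ 2 * t ^ n - 2 * m * (b n * real n ^ 1 * t ^ n)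
        + m\<^sup>2 * (b n * real n ^ 0 * t ^ n)"
      using nonneg t by simp
  qed
  also have "\<dots> = theta_ps b 2 t - m\<^sup>2 * ps b t"
    using m by (simp add: ps_eq_theta_ps_0 power2_eq_square algebra_simps)
  finally show ?thesis by (simp add: m_def)
qed

end

lemma kmean_exp_has_real_derivative:
  assumes "ereal (exp u) < conv_radius b"
  shows "((\<lambda>u. kmean b (exp u)) has_real_derivative kvar b (exp u)) (at u)"
  using DERIV_chain2[OF kmean_has_real_derivative DERIV_exp] assms by simp

lemma ln_ps_exp_has_real_derivative:
  assumes "ereal (exp u) < conv_radius b"
  shows "((\<lambda>u. ln (ps b (exp u))) has_real_derivative kmean b (exp u)) (at u)"
proof -
  have "0 < ps b (exp u)"
    using theta_ps_pos_nonconst assms by (simp add: ps_eq_theta_ps_0)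
  with DERIV_chain2[OF DERIV_ln has_real_derivative_theta_ps_exp[OF assms, of 0]] show ?thesis
    using assms by (simp add: kmean_eq_theta_ps ps_eq_theta_ps_0 divide_inverse mult_ac)
qed

end

section \<open>Approaching the radius of convergence\<close>

lemma eventually_upto_iff:
  assumes "0 < r"
  shows "eventually P (upto r) \<longleftrightarrow> (\<exists>t0>0. ereal t0 < r \<and> (\<forall>t. t0 < t \<and> ereal t < r \<longrightarrow> P t))"
proof (cases r)
  case PInf
  show ?thesis
  proof
    assume "eventually P (upto r)"
    then obtain N where "\<forall>n\<ge>N. P n" by (auto simp: upto_def PInf eventually_at_top_linorder)
    then show "\<exists>t0>0. ereal t0 < r \<and> (\<forall>t. t0 < t \<and> ereal t < r \<longrightarrow> P t)"
      by (intro exI[of _ "max N 1"]) (auto simp: PInf max_def)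
  next
    assume "\<exists>t0>0. ereal t0 < r \<and> (\<forall>t. t0 < t \<and> ereal t < r \<longrightarrow> P t)"
    then obtain t0 where "\<forall>t. t0 < t \<longrightarrow> P t" using PInf by auto
    then show "eventually P (upto r)"
      by (auto simp: upto_def PInf eventually_at_top_linorder intro!: exI[of _ "t0 + 1"])
  qed
next
  case (real R)
  show ?thesis
  proof
    assume "eventually P (upto r)"
    then obtain c where "c < R" "\<forall>y>c. y < R \<longrightarrow> P y"
      by (auto simp: upto_def real eventually_at_left_field)
    then show "\<exists>t0>0. ereal t0 < r \<and> (\<forall>t. t0 < t \<and> ereal t < r \<longrightarrow> P t)"
      using assms by (intro exI[of _ "max c (R / 2)"]) (auto simp: real)
  next
    assume "\<exists>t0>0. ereal t0 < r \<and> (\<forall>t. t0 < t \<and> ereal t < r \<longrightarrow> P t)"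
    then obtain t0 where "t0 < R" "\<forall>t. t0 < t \<and> t < R \<longrightarrow> P t" using real by auto
    then show "eventually P (upto r)"
      by (auto simp: upto_def real eventually_at_left_field)
  qed
qed (use assms in auto)

lemma upto_neq_bot: "0 < r \<Longrightarrow> upto r \<noteq> bot"
  by (cases r) (auto simp: upto_def)

lemma eventually_upto_gt: "0 < c \<Longrightarrow> ereal c < r \<Longrightarrow> eventually (\<lambda>t. c < t) (upto r)"
  by (subst eventually_upto_iff) (auto intro: order.strict_trans[of 0 "ereal c"])

lemma eventually_upto_in_disc: "0 < r \<Longrightarrow> eventually (\<lambda>t. 0 < t \<and> ereal t < r) (upto r)"
  by (subst eventually_upto_iff)
    (auto intro!: exI[of _ "if r = \<infinity> then 1 else real_of_ereal r / 2"], (cases r; auto)+)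

lemma tendsto_upto_sequentially:
  fixes f :: "real \<Rightarrow> real"
  assumes "0 < r" and "\<And>X. filterlim X (upto r) sequentially \<Longrightarrow> (\<lambda>n. f (X n)) \<longlonglongrightarrow> L"
  shows "(f \<longlongrightarrow> L) (upto r)"
proof (cases r)
  case PInf
  then show ?thesis
    using assms(2) by (auto simp: upto_def intro: tendsto_at_topI_sequentially)
next
  case (real R)
  have "(f \<longlongrightarrow> L) (at_left R)"
  proof (rule tendsto_at_left_sequentially)
    show "0 < R" using assms(1) real by simp
    fix S :: "nat \<Rightarrow> real" assume "\<And>n. S n < R" "S \<longlonglongrightarrow> R"
    then have "filterlim S (at_left R) sequentially"
      by (intro tendsto_imp_filterlim_at_left) auto
    then show "(\<lambda>n. f (S n)) \<longlonglongrightarrow> L" using assms(2) by (simp add: upto_def real)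
  qed
  then show ?thesis by (simp add: upto_def real)
qed (use assms in auto)

lemma filterlim_exp_upto_ln:
  assumes "0 < r"
  shows "filterlim exp (upto r) (upto_ln r)"
proof (cases r)
  case PInf
  then show ?thesis by (simp add: upto_def upto_ln_def exp_at_top)
next
  case (real R)
  then have "0 < R" using assms by simp
  have "filterlim exp (at_left R) (at_left (ln R))"
  proof (rule tendsto_imp_filterlim_at_left)
    have "((\<lambda>x. exp x) \<longlongrightarrow> exp (ln R)) (at_left (ln R))"
      by (rule tendsto_exp[OF tendsto_ident_at])
    then show "(exp \<longlongrightarrow> R) (at_left (ln R))" using \<open>0 < R\<close> by simp
    show "eventually (\<lambda>x. exp x < R) (at_left (ln R))"
      unfolding eventually_at_left_field
    proof (intro exI[of _ "ln R - 1"] conjI allI impI)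
      show "exp y < R" if "y < ln R" for y
        using that \<open>0 < R\<close> by (metis exp_less_mono exp_ln)
    qed simp
  qed
  then show ?thesis by (simp add: upto_def upto_ln_def real)
qed (use assms in auto)

section \<open>Growth of clans\<close>

lemma power_le_fact_mult_exp:
  fixes x m :: real
  assumes "0 \<le> x" "0 < m"
  shows "x ^ k \<le> fact k * m ^ k * exp (x / m)"
proof -
  have "(\<lambda>n. (x / m) ^ n / fact n) sums exp (x / m)"
    using exp_converges[of "x / m"] by (simp add: divide_inverse_commute scaleR_conv_of_real)
  then have "(x / m) ^ k / fact k \<le> exp (x / m)"
    using sum_le_suminf[of "\<lambda>n. (x / m) ^ n / fact n" "{k}"] assms by (simp add: sums_iff)
  then show ?thesis using assms by (simp add: power_divide field_simps)
qed

lemma exp_in_disc_mono: "v \<le> u \<Longrightarrow> ereal (exp u) < r \<Longrightarrow> ereal (exp v) < r"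
  by (meson ereal_less_eq(3) exp_le_cancel_iff order_le_less_trans)

text \<open>Beyond \<open>t0\<close> the clan hypothesis gives \<open>\<sigma>_g \<le> m_g / 2\<close>. Then \<open>1 / m_g(e^s)\<close> decreases with
  slope at most \<open>1/4\<close>, so on the window \<open>[s, s + 1 / m_g(e^s)]\<close> the mean \<open>m_g\<close> grows at most by the
  factor \<open>4/3\<close> and \<open>g\<close> at most by \<open>e^(4/3)\<close>.\<close>
locale clan_growth = nonneg_nonconst_ps +
  fixes t0 :: real
  assumes t0: "0 < t0" "ereal t0 < conv_radius b"
    and kvar_le: "\<And>t. t0 < t \<Longrightarrow> ereal t < conv_radius b \<Longrightarrow> kvar b t \<le> kmean b t ^ 2 / 4"
    and ps_at_top: "filterlim (ps b) at_top (upto (conv_radius b))"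
begin

lemma inverse_kmean_exp_lower:
  assumes "t0 < exp s" "s \<le> u" "ereal (exp u) < conv_radius b"
  shows "inverse (kmean b (exp s)) - (u - s) / 4 \<le> inverse (kmean b (exp u))"
proof -
  have "inverse (kmean b (exp s)) + s / 4 \<le> inverse (kmean b (exp u)) + u / 4"
  proof (rule DERIV_nonneg_imp_nondecreasing[OF \<open>s \<le> u\<close>])
    fix v assume v: "s \<le> v" "v \<le> u"
    have v_disc: "ereal (exp v) < conv_radius b" using exp_in_disc_mono[OF v(2) assms(3)] .
    have m: "0 < kmean b (exp v)" using kmean_pos[OF _ v_disc] by simp
    have "((\<lambda>v. inverse (kmean b (exp v))) has_real_derivative
        - (kvar b (exp v) * inverse (kmean b (exp v) ^ 2))) (at v)"
      using DERIV_inverse_fun[OF kmean_exp_has_real_derivative[OF v_disc]] m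
      by (simp add: numeral_2_eq_2)
    then have "((\<lambda>v. inverse (kmean b (exp v)) + v / 4) has_real_derivative
        - (kvar b (exp v) * inverse (kmean b (exp v) ^ 2)) + 1 / 4) (at v)"
      by (intro DERIV_add) (auto intro!: derivative_eq_intros)
    moreover have "kvar b (exp v) \<le> kmean b (exp v) ^ 2 / 4"
      using kvar_le v_disc assms(1) v(1) by (meson exp_le_cancel_iff less_le_trans)
    then have "0 \<le> - (kvar b (exp v) * inverse (kmean b (exp v) ^ 2)) + 1 / 4"
      using m by (simp add: field_simps)
    ultimately show "\<exists>y. ((\<lambda>v. inverse (kmean b (exp v)) + v / 4) has_real_derivative y) (at v) \<and> 0 \<le> y"
      by blast
  qed
  then show ?thesis by (simp add: field_simps)
qed

context
  fixes s u :: real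
  assumes s: "t0 < exp s" and window: "s \<le> u" "u \<le> s + inverse (kmean b (exp s))"
    and u_disc: "ereal (exp u) < conv_radius b"
begin

lemma s_disc: "ereal (exp s) < conv_radius b"
  using exp_in_disc_mono[OF window(1) u_disc] .

lemma kmean_exp_window_le: "kmean b (exp u) \<le> 4 / 3 * kmean b (exp s)"
proof -
  have "4 * inverse (kmean b (exp s)) - (u - s) \<le> 4 * inverse (kmean b (exp u))"
    using inverse_kmean_exp_lower[OF s window(1) u_disc] by (simp add: field_simps)
  then have "3 / 4 * inverse (kmean b (exp s)) \<le> inverse (kmean b (exp u))"
    using window(2) by linarith
  then show ?thesis
    using kmean_pos[OF _ s_disc] kmean_pos[OF _ u_disc] by (simp add: field_simps)
qed

lemma ps_exp_window_le: "ps b (exp u) \<le> exp (4 / 3) * ps b (exp s)"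
proof -
  define M where "M = kmean b (exp s)"
  have M: "0 < M" using kmean_pos[OF _ s_disc] by (simp add: M_def)
  have "ln (ps b (exp u)) - 4 / 3 * M * u \<le> ln (ps b (exp s)) - 4 / 3 * M * s"
  proof (rule DERIV_nonpos_imp_nonincreasing[OF window(1)])
    fix v assume v: "s \<le> v" "v \<le> u"
    have v_disc: "ereal (exp v) < conv_radius b" using exp_in_disc_mono[OF v(2) u_disc] .
    have "((\<lambda>v. ln (ps b (exp v)) - 4 / 3 * M * v) has_real_derivative kmean b (exp v) - 4 / 3 * M)
        (at v)"
      by (intro DERIV_diff ln_ps_exp_has_real_derivative v_disc) (auto intro!: derivative_eq_intros)
    moreover have "kmean b (exp v) \<le> 4 / 3 * M"
      unfolding M_def
      by (rule clan_growth.kmean_exp_window_le[OF clan_growth_axioms s])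
        (use window v v_disc in auto)
    ultimately show "\<exists>y. ((\<lambda>v. ln (ps b (exp v)) - 4 / 3 * M * v) has_real_derivative y) (at v)
        \<and> y \<le> 0" by force
  qed
  moreover have "M * (u - s) \<le> 1"
    using window M mult_left_mono[of "u - s" "inverse M" M] by (simp add: M_def)
  ultimately have "ln (ps b (exp u)) \<le> ln (ps b (exp s)) + 4 / 3"
    by (simp add: algebra_simps)
  then have "exp (ln (ps b (exp u))) \<le> exp (ln (ps b (exp s)) + 4 / 3)"
    by simp
  then show ?thesis
    using theta_ps_pos_nonconst[OF _ u_disc, of 0] theta_ps_pos_nonconst[OF _ s_disc, of 0]
    by (simp add: ps_eq_theta_ps_0 exp_add mult.commute)
qed

end

text \<open>Otherwise \<open>g\<close> would stay below \<open>e^(4/3) g(e^s)\<close> all the way up to the radius of convergence.\<close>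
lemma exp_window_in_disc:
  assumes "t0 < exp s" "ereal (exp s) < conv_radius b"
  shows "ereal (exp (s + inverse (kmean b (exp s)))) < conv_radius b"
proof (cases "conv_radius b")
  case (real R)
  show ?thesis
  proof (rule ccontr)
    assume "\<not> ?thesis"
    then have R: "R \<le> exp (s + inverse (kmean b (exp s)))" using real by auto
    have "eventually (\<lambda>t. exp (4 / 3) * ps b (exp s) < ps b t) (upto (conv_radius b))"
      using ps_at_top filterlim_at_top_dense by blast
    moreover have "eventually (\<lambda>t. exp s < t) (upto (conv_radius b))"
      by (rule eventually_upto_gt) (use assms in auto)
    moreover have "eventually (\<lambda>t. 0 < t \<and> ereal t < conv_radius b) (upto (conv_radius b))"
      by (rule eventually_upto_in_disc[OF radius])
    ultimately have "eventually (\<lambda>t. exp (4 / 3) * ps b (exp s) < ps b t \<and> exp s < t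
        \<and> 0 < t \<and> ereal t < conv_radius b) (upto (conv_radius b))"
      by eventually_elim blast
    then obtain t where
      t: "exp (4 / 3) * ps b (exp s) < ps b t" "exp s < t" "0 < t" "ereal t < conv_radius b"
      using eventually_happens'[OF upto_neq_bot[OF radius]] by blast
    have "t < R" using t(4) real by simp
    then have "ln t \<le> s + inverse (kmean b (exp s))"
      using R t(3) by (metis exp_le_cancel_iff exp_ln less_imp_le order_less_le_trans)
    moreover have "s \<le> ln t"
      using t(2,3) by (metis exp_le_cancel_iff exp_ln less_imp_le)
    ultimately have "ps b (exp (ln t)) \<le> exp (4 / 3) * ps b (exp s)"
      using assms t by (intro ps_exp_window_le) auto
    with t show False by simp
  qed
qed (use radius in auto)

text \<open>Uses \<open>n^k \<le> k! m^k e^(n/m)\<close> and \<open>e^(n/m) t^n = (t e^(1/m))^n\<close>, i.e. evaluates \<open>g\<close> at the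
  right end of the window.\<close>
lemma theta_ps_le_fact_kmean_power:
  assumes t: "t0 < t" "ereal t < conv_radius b"
  shows "theta_ps b k t \<le> fact k * exp (4 / 3) * kmean b t ^ k * ps b t"
proof -
  define M where "M = kmean b t"
  have "0 < t" using t t0 by simp
  then have M: "0 < M" using kmean_pos t by (simp add: M_def)
  define x where "x = exp (ln t + inverse M)"
  have x_disc: "ereal x < conv_radius b"
    using exp_window_in_disc[of "ln t"] t \<open>0 < t\<close> by (simp add: x_def M_def)
  have "theta_ps b k t \<le> (\<Sum>n. fact k * M ^ k * (b n * real n ^ 0 * x ^ n))"
    unfolding theta_ps_def
  proof (rule suminf_le)
    show "summable (\<lambda>n. b n * real n ^ k * t ^ n)"
      using summable_theta_ps[of t b k] t \<open>0 < t\<close> by simp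
    show "summable (\<lambda>n. fact k * M ^ k * (b n * real n ^ 0 * x ^ n))"
      using summable_theta_ps[of x b 0] x_disc by (intro summable_mult) (simp add: x_def)
    fix n
    have "x ^ n = (t * exp (inverse M)) ^ n" using \<open>0 < t\<close> by (simp add: x_def exp_add)
    then have "x ^ n = t ^ n * exp (real n / M)"
      by (simp add: power_mult_distrib exp_of_nat_mult divide_inverse)
    moreover have "b n * real n ^ k * t ^ n \<le> b n * (fact k * M ^ k * exp (real n / M)) * t ^ n"
      using power_le_fact_mult_exp[of "real n" M k] M nonneg \<open>0 < t\<close>
      by (intro mult_right_mono mult_left_mono) auto
    ultimately show "b n * real n ^ k * t ^ n \<le> fact k * M ^ k * (b n * real n ^ 0 * x ^ n)"
      by (simp add: mult_ac)
  qed
  also have "\<dots> = fact k * M ^ k * ps b x"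
    using summable_theta_ps[of x b 0] x_disc by (simp add: suminf_mult x_def ps_def)
  also have "ps b x \<le> exp (4 / 3) * ps b t"
    using ps_exp_window_le[of "ln t" "ln t + inverse M"] t x_disc \<open>0 < t\<close> M
    by (simp add: x_def M_def)
  then have "fact k * M ^ k * ps b x \<le> fact k * M ^ k * (exp (4 / 3) * ps b t)"
    using M by (intro mult_left_mono) auto
  finally show ?thesis by (simp add: M_def mult_ac)
qed

lemma theta_ps_ratio_le:
  assumes t: "t0 < t" "ereal t < conv_radius b" and "2 \<le> k"
  shows "theta_ps b k t / sqrt (theta_ps b 2 t) ^ k \<le> fact k * exp (4 / 3) / sqrt (ps b t) ^ (k - 2)"
proof -
  define M where "M = kmean b t"
  define C where "C = fact k * exp (4 / 3 :: real)"
  have "0 < t" using t t0 by simp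
  have M: "0 < M" using kmean_pos \<open>0 < t\<close> t by (simp add: M_def)
  have g: "0 < ps b t" using theta_ps_pos_nonconst[OF \<open>0 < t\<close> t(2), of 0] by (simp add: ps_eq_theta_ps_0)
  have "sqrt (M\<^sup>2 * ps b t) \<le> sqrt (theta_ps b 2 t)"
    using kmean_sq_mult_ps_le[OF \<open>0 < t\<close> t(2)] by (simp add: M_def)
  moreover have "sqrt (M\<^sup>2 * ps b t) = M * sqrt (ps b t)"
    using M by (simp add: real_sqrt_mult)
  ultimately have "(M * sqrt (ps b t)) ^ k \<le> sqrt (theta_ps b 2 t) ^ k"
    using M g by (intro power_mono) auto
  moreover have "0 < (M * sqrt (ps b t)) ^ k" "0 < sqrt (theta_ps b 2 t) ^ k"
    using M g theta_ps_pos_nonconst[OF \<open>0 < t\<close> t(2), of 2] by simp_all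
  ultimately have "theta_ps b k t / sqrt (theta_ps b 2 t) ^ k \<le> theta_ps b k t / (M * sqrt (ps b t)) ^ k"
    using theta_ps_nonneg[OF nonneg, of t k] \<open>0 < t\<close> t(2)
    by (intro divide_left_mono mult_pos_pos) auto
  also have "\<dots> \<le> C * M ^ k * ps b t / (M * sqrt (ps b t)) ^ k"
    using theta_ps_le_fact_kmean_power[OF t, of k] M g
    by (intro divide_right_mono) (auto simp: M_def C_def)
  also have "\<dots> = C * ps b t / sqrt (ps b t) ^ k"
    using M by (simp add: power_mult_distrib)
  also have "sqrt (ps b t) ^ k = ps b t * sqrt (ps b t) ^ (k - 2)"
    using \<open>2 \<le> k\<close> g by (metis le_add_diff_inverse power_add real_sqrt_pow2 less_imp_le)
  finally show ?thesis using g by (simp add: C_def)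
qed

end

section \<open>Convergence of the moments\<close>

lemma std_normal_moment_0: "(LINT x|std_normal_distribution. x ^ 0) = 1"
  using std_normal_distribution_even_moments(1)[of 0] by simp

lemma std_normal_moment_Suc_Suc:
  "(LINT x|std_normal_distribution. x ^ Suc (Suc j))
    = real (Suc j) * (LINT x|std_normal_distribution. x ^ j)"
proof (cases "even j")
  case True
  then obtain k where j: "j = 2 * k" by blast
  have num: "fact (2 * Suc k) = 2 * real (Suc k) * (real (Suc (2 * k)) * fact (2 * k) :: real)"
    by (simp add: algebra_simps)
  have den: "2 ^ Suc k * fact (Suc k) = 2 * real (Suc k) * (2 ^ k * fact k :: real)"
    by (simp add: algebra_simps)
  have "fact (2 * Suc k) / (2 ^ Suc k * fact (Suc k))
      = real (Suc (2 * k)) * (fact (2 * k) / (2 ^ k * fact k) :: real)"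
    unfolding num den by (subst mult_divide_mult_cancel_left) simp_all
  then show ?thesis
    using std_normal_distribution_even_moments(1)[of k] std_normal_distribution_even_moments(1)[of "Suc k"]
    by (simp add: j)
next
  case False
  then show ?thesis
    using integral_std_normal_distribution_moment_odd[of j]
      integral_std_normal_distribution_moment_odd[of "Suc (Suc j)"] by simp
qed

lemma std_normal_moment_Suc_eq_sum:
  "(LINT x|std_normal_distribution. x ^ Suc p) = (\<Sum>i\<in>{1..p}. real (p choose i)
    * (if i = 1 then 1 else 0) * (LINT x|std_normal_distribution. x ^ (p - i)))"
proof (cases p)
  case 0
  then show ?thesis using integral_std_normal_distribution_moment_odd[of 1] by simp
next
  case (Suc q)
  then have "(\<Sum>i\<in>{1..p}. real (p choose i) * (if i = 1 then 1 else 0)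
      * (LINT x|std_normal_distribution. x ^ (p - i))) = real p * (LINT x|std_normal_distribution. x ^ q)"
    by (simp add: if_distrib[of "\<lambda>x. _ * x * _"] sum.delta cong: if_cong)
  also have "\<dots> = (LINT x|std_normal_distribution. x ^ Suc p)"
    using std_normal_moment_Suc_Suc[of q] by (simp add: Suc)
  finally show ?thesis by (rule sym)
qed

locale clan_exponent = nonneg_nonconst_ps +
  assumes clan: "is_clan b" and ps_at_top: "filterlim (ps b) at_top (upto (conv_radius b))"
begin

lemma eventually_kvar_le: "eventually (\<lambda>t. kvar b t \<le> kmean b t ^ 2 / 4) (upto (conv_radius b))"
proof -
  have "eventually (\<lambda>t. dist (ksd b t / kmean b t) 0 < 1 / 2) (upto (conv_radius b))"
    using clan unfolding is_clan_def by (rule tendstoD) simp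
  with eventually_upto_in_disc[OF radius] show ?thesis
  proof eventually_elim
    case (elim t)
    then have "0 < kmean b t" using kmean_pos by blast
    with elim have "\<bar>ksd b t\<bar> \<le> kmean b t / 2" by (simp add: abs_divide field_simps)
    then have "ksd b t ^ 2 \<le> (kmean b t / 2) ^ 2"
      by (metis abs_ge_zero power2_abs power_mono)
    show ?case
    proof (cases "0 \<le> kvar b t")
      case True
      with \<open>ksd b t ^ 2 \<le> (kmean b t / 2) ^ 2\<close> show ?thesis by (simp add: ksd_def power_divide)
    qed (use zero_le_power2[of "kmean b t"] in linarith)
  qed
qed

lemma theta_ps_ratio_tendsto_0:
  assumes "3 \<le> k"
  shows "((\<lambda>t. theta_ps b k t / sqrt (theta_ps b 2 t) ^ k) \<longlongrightarrow> 0) (upto (conv_radius b))"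
proof -
  let ?F = "upto (conv_radius b)"
  obtain t0 where t0: "0 < t0" "ereal t0 < conv_radius b"
    and kvar_le: "\<And>t. t0 < t \<Longrightarrow> ereal t < conv_radius b \<Longrightarrow> kvar b t \<le> kmean b t ^ 2 / 4"
    using eventually_kvar_le unfolding eventually_upto_iff[OF radius] by blast
  interpret clan_growth b t0
    by unfold_locales (use t0 kvar_le ps_at_top in auto)
  have window: "eventually (\<lambda>t. t0 < t \<and> ereal t < conv_radius b) ?F"
    unfolding eventually_upto_iff[OF radius] using t0 by blast
  have "filterlim (\<lambda>t. sqrt (ps b t) ^ (k - 2)) at_top ?F"
    using filterlim_compose[OF sqrt_at_top ps_at_top] assms
    by (intro filterlim_pow_at_top) auto
  then have "((\<lambda>t. fact k * exp (4 / 3) / sqrt (ps b t) ^ (k - 2)) \<longlongrightarrow> 0) ?F"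
    by (intro tendsto_divide_0[OF tendsto_const] filterlim_at_top_imp_at_infinity)
  then show ?thesis
  proof (rule tendsto_sandwich[OF _ _ tendsto_const, rotated 2])
    show "eventually (\<lambda>t. 0 \<le> theta_ps b k t / sqrt (theta_ps b 2 t) ^ k) ?F"
      using window
      by eventually_elim (use nonneg t0 in \<open>auto intro!: divide_nonneg_nonneg theta_ps_nonneg zero_le_power\<close>)
    show "eventually (\<lambda>t. theta_ps b k t / sqrt (theta_ps b 2 t) ^ k
        \<le> fact k * exp (4 / 3) / sqrt (ps b t) ^ (k - 2)) ?F"
      using window by eventually_elim (use theta_ps_ratio_le assms in auto)
  qed
qed

lemma theta_ps_ratio_tendsto:
  assumes "1 \<le> i"
  shows "((\<lambda>t. theta_ps b (Suc i) t / sqrt (theta_ps b 2 t) ^ Suc i) \<longlongrightarrow> (if i = 1 then 1 else 0))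
    (upto (conv_radius b))"
proof (cases "i = 1")
  case True
  from eventually_upto_in_disc[OF radius]
  have "eventually (\<lambda>t. theta_ps b (Suc i) t / sqrt (theta_ps b 2 t) ^ Suc i = 1) (upto (conv_radius b))"
  proof eventually_elim
    case (elim t)
    then have "0 < theta_ps b 2 t" using theta_ps_pos_nonconst by blast
    with True show ?case by (simp add: numeral_2_eq_2)
  qed
  with True show ?thesis by (simp add: tendsto_eventually)
next
  case False
  with assms show ?thesis using theta_ps_ratio_tendsto_0[of "Suc i"] by simp
qed

text \<open>In the recursion for the moment of order \<open>p + 1\<close> only the term \<open>i = 1\<close> survives in the
  limit, leaving the recursion \<open>\<mu>_(p+1) = p \<mu>_(p-1)\<close> of the Gaussian moments.\<close>
lemma knorm_moment_exp_coeffs_tendsto: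
  "((\<lambda>t. knorm_moment (exp_coeffs b) t j) \<longlongrightarrow> (LINT x|std_normal_distribution. x ^ j))
    (upto (conv_radius b))"
proof (induction j rule: less_induct)
  case (less j)
  let ?F = "upto (conv_radius b)" and ?a = "exp_coeffs b"
  note in_disc = eventually_upto_in_disc[OF radius]
  show ?case
  proof (cases j)
    case 0
    from in_disc have "eventually (\<lambda>t. knorm_moment ?a t 0 = 1) ?F"
      by eventually_elim (use knorm_moment_exp_coeffs_0[OF nonneg] in blast)
    then show ?thesis unfolding 0 std_normal_moment_0 by (rule tendsto_eventually)
  next
    case (Suc p)
    from in_disc have "eventually (\<lambda>t. knorm_moment ?a t (Suc p) = (\<Sum>i\<in>{1..p}. real (p choose i)
        * (theta_ps b (Suc i) t / sqrt (theta_ps b 2 t) ^ Suc i) * knorm_moment ?a t (p - i))) ?F"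
      by eventually_elim (use knorm_moment_exp_coeffs_Suc[OF nonneg] theta_ps_pos_nonconst in auto)
    moreover have "((\<lambda>t. \<Sum>i\<in>{1..p}. real (p choose i)
        * (theta_ps b (Suc i) t / sqrt (theta_ps b 2 t) ^ Suc i) * knorm_moment ?a t (p - i))
      \<longlongrightarrow> (\<Sum>i\<in>{1..p}. real (p choose i) * (if i = 1 then 1 else 0)
        * (LINT x|std_normal_distribution. x ^ (p - i)))) ?F"
      using less Suc by (intro tendsto_sum tendsto_mult tendsto_const theta_ps_ratio_tendsto) auto
    ultimately show ?thesis
      unfolding Suc std_normal_moment_Suc_eq_sum by (simp add: tendsto_cong)
  qed
qed

end

section \<open>From moments to distribution functions\<close>

lemma std_normal_Taylor_bound_tendsto_0:
  "(\<lambda>q. \<bar>\<theta>\<bar> ^ (2 * q) / fact (2 * q) * ((LINT x|std_normal_distribution. x ^ (2 * q)) + 1))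
    \<longlonglongrightarrow> 0"
proof -
  have pow_fact: "(\<lambda>n. y ^ n / fact n) \<longlonglongrightarrow> 0" for y :: real
    using summable_LIMSEQ_zero[OF summable_exp[of y]] by (simp add: divide_inverse mult.commute)
  have "\<bar>\<theta>\<bar> ^ (2 * q) / fact (2 * q) * (LINT x|std_normal_distribution. x ^ (2 * q))
      = (\<theta>\<^sup>2 / 2) ^ q / fact q" for q
  proof -
    have "\<bar>\<theta>\<bar> ^ (2 * q) / fact (2 * q) * (LINT x|std_normal_distribution. x ^ (2 * q))
        = \<bar>\<theta>\<bar> ^ (2 * q) / (2 ^ q * fact q)"
      using std_normal_distribution_even_moments(1)[of q] by simp
    also have "\<dots> = (\<theta>\<^sup>2 / 2) ^ q / fact q"
      by (simp add: power_mult power_divide power2_abs)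
    finally show ?thesis .
  qed
  then have "\<bar>\<theta>\<bar> ^ (2 * q) / fact (2 * q) * ((LINT x|std_normal_distribution. x ^ (2 * q)) + 1)
      = (\<theta>\<^sup>2 / 2) ^ q / fact q + \<bar>\<theta>\<bar> ^ (2 * q) / fact (2 * q)" for q
    by (simp add: distrib_left)
  moreover have "(\<lambda>q. \<bar>\<theta>\<bar> ^ (2 * q) / fact (2 * q)) \<longlonglongrightarrow> 0"
    using filterlim_compose[OF pow_fact[of "\<bar>\<theta>\<bar>"] mult_nat_left_at_top[of 2]] by simp
  ultimately show ?thesis
    using tendsto_add[OF pow_fact[of "\<theta>\<^sup>2 / 2"]] by simp
qed

definition char_Taylor :: "real measure \<Rightarrow> nat \<Rightarrow> real \<Rightarrow> complex" where
  "char_Taylor M K \<theta> = (\<Sum>k\<le>K. (\<i> * \<theta>) ^ k / fact k * complex_of_real (LINT x|M. x ^ k))"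

lemma (in real_distribution) char_Taylor_even_bound:
  assumes "\<And>k. k \<le> K \<Longrightarrow> integrable M (\<lambda>x. x ^ k)" "even K"
  shows "dist (char M \<theta>) (char_Taylor M K \<theta>) \<le> 2 * \<bar>\<theta>\<bar> ^ K / fact K * (LINT x|M. x ^ K)"
  using char_approx1[where n=K and t=\<theta>, OF assms(1)] assms(2)
  by (simp add: char_Taylor_def dist_norm power_even_abs)

lemma char_dist_le_char_Taylor_dist:
  assumes "real_distribution M" "real_distribution N" "even K"
    and "\<And>k. k \<le> K \<Longrightarrow> integrable M (\<lambda>x. x ^ k)" "\<And>k. k \<le> K \<Longrightarrow> integrable N (\<lambda>x. x ^ k)"
  shows "dist (char M \<theta>) (char N \<theta>) \<le> 2 * \<bar>\<theta>\<bar> ^ K / fact K * ((LINT x|M. x ^ K) + (LINT x|N. x ^ K))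
    + dist (char_Taylor M K \<theta>) (char_Taylor N K \<theta>)"
proof -
  have "dist (char M \<theta>) (char_Taylor M K \<theta>) \<le> 2 * \<bar>\<theta>\<bar> ^ K / fact K * (LINT x|M. x ^ K)"
    using real_distribution.char_Taylor_even_bound[OF assms(1,4,3)] .
  moreover have "dist (char N \<theta>) (char_Taylor N K \<theta>) \<le> 2 * \<bar>\<theta>\<bar> ^ K / fact K * (LINT x|N. x ^ K)"
    using real_distribution.char_Taylor_even_bound[OF assms(2,5,3)] .
  moreover have "dist (char M \<theta>) (char N \<theta>)
      \<le> dist (char M \<theta>) (char_Taylor M K \<theta>) + dist (char_Taylor M K \<theta>) (char N \<theta>)"
    by (rule dist_triangle)
  moreover have "dist (char_Taylor M K \<theta>) (char N \<theta>)
      \<le> dist (char_Taylor M K \<theta>) (char_Taylor N K \<theta>) + dist (char N \<theta>) (char_Taylor N K \<theta>)"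
    using dist_triangle[of "char_Taylor M K \<theta>" "char N \<theta>" "char_Taylor N K \<theta>"]
    by (simp add: dist_commute)
  ultimately show ?thesis by (simp add: distrib_left)
qed

text \<open>Expand both characteristic functions to an even order \<open>K\<close> so large that the Taylor
  remainders are small; the Taylor polynomials then converge with the moments.\<close>
lemma char_tendsto_std_normal_if_moments_tendsto:
  fixes M :: "'a \<Rightarrow> real measure"
  assumes distr: "eventually (\<lambda>t. real_distribution (M t)) F"
    and integrable: "\<And>k. eventually (\<lambda>t. integrable (M t) (\<lambda>x. x ^ k)) F"
    and moments: "\<And>k. ((\<lambda>t. LINT x|M t. x ^ k) \<longlongrightarrow> (LINT x|std_normal_distribution. x ^ k)) F"
  shows "((\<lambda>t. char (M t) \<theta>) \<longlongrightarrow> char std_normal_distribution \<theta>) F"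
proof (rule tendstoI)
  fix \<epsilon> :: real assume "0 < \<epsilon>"
  let ?Z = "\<lambda>k. LINT x|std_normal_distribution. x ^ k"
  obtain q where q: "\<bar>\<theta>\<bar> ^ (2 * q) / fact (2 * q) * (?Z (2 * q) + 1) < \<epsilon> / 6"
    using order_tendstoD(2)[OF std_normal_Taylor_bound_tendsto_0, of "\<epsilon> / 6"] \<open>0 < \<epsilon>\<close>
    by (auto simp: eventually_sequentially)
  define K where "K = 2 * q"
  define c where "c = 2 * \<bar>\<theta>\<bar> ^ K / fact K"
  have c: "0 \<le> c" "2 * (c * (?Z K + 1)) < 2 * \<epsilon> / 3"
    using q by (simp_all add: c_def K_def field_simps)
  have "even K" by (simp add: K_def)
  have "eventually (\<lambda>t. (LINT x|M t. x ^ K) < ?Z K + 1) F"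
    using moments[of K] by (rule order_tendstoD) simp
  moreover have "eventually (\<lambda>t. dist (char_Taylor (M t) K \<theta>) (char_Taylor std_normal_distribution K \<theta>)
      < \<epsilon> / 3) F"
    unfolding char_Taylor_def using \<open>0 < \<epsilon>\<close>
    by (intro tendstoD tendsto_sum tendsto_mult tendsto_const tendsto_of_real moments) simp
  moreover have "eventually (\<lambda>t. \<forall>k\<in>{..K}. integrable (M t) (\<lambda>x. x ^ k)) F"
    by (rule eventually_ball_finite) (auto intro: integrable)
  moreover note distr
  ultimately show "eventually (\<lambda>t. dist (char (M t) \<theta>) (char std_normal_distribution \<theta>) < \<epsilon>) F"
  proof eventually_elim
    case (elim t)
    have "dist (char (M t) \<theta>) (char std_normal_distribution \<theta>) \<le> c * ((LINT x|M t. x ^ K) + ?Z K)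
        + dist (char_Taylor (M t) K \<theta>) (char_Taylor std_normal_distribution K \<theta>)"
      using char_dist_le_char_Taylor_dist[OF elim(4) real_dist_normal_dist \<open>even K\<close>]
        elim(3) integrable_std_normal_distribution_moment by (simp add: c_def)
    moreover have "c * ((LINT x|M t. x ^ K) + ?Z K) \<le> 2 * (c * (?Z K + 1))"
      using mult_left_mono[of "(LINT x|M t. x ^ K) + ?Z K" "2 * (?Z K + 1)" c] elim(1) c(1)
      by (simp add: algebra_simps)
    ultimately show ?case using c(2) elim(2) by linarith
  qed
qed

lemma prob_space_density_count_space:
  assumes "\<And>n. 0 \<le> p n" "p sums 1"
  shows "prob_space (density (count_space UNIV) (\<lambda>n :: nat. ennreal (p n)))"
proof
  have "emeasure (density (count_space UNIV) (\<lambda>n. ennreal (p n))) UNIV = (\<Sum>n. ennreal (p n))"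
    by (simp add: emeasure_density nn_integral_count_space_nat)
  also have "\<dots> = 1" using suminf_ennreal_eq[OF assms] by simp
  finally show "emeasure (density (count_space UNIV) (\<lambda>n. ennreal (p n)))
      (space (density (count_space UNIV) (\<lambda>n. ennreal (p n)))) = 1" by simp
qed

lemma
  fixes f :: "nat \<Rightarrow> real"
  assumes "\<And>n. 0 \<le> p n" "summable (\<lambda>n. \<bar>p n * f n\<bar>)"
  shows integrable_density_count_space: "integrable (density (count_space UNIV) (\<lambda>n. ennreal (p n))) f"
    and integral_density_count_space:
      "integral\<^sup>L (density (count_space UNIV) (\<lambda>n. ennreal (p n))) f = (\<Sum>n. p n * f n)"
proof -
  have "integrable (count_space UNIV) (\<lambda>n. p n *\<^sub>R f n)"
    using assms(2) by (simp add: integrable_count_space_nat_iff)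
  then show "integrable (density (count_space UNIV) (\<lambda>n. ennreal (p n))) f"
    using assms(1) by (subst integrable_density) auto
  show "integral\<^sup>L (density (count_space UNIV) (\<lambda>n. ennreal (p n))) f = (\<Sum>n. p n * f n)"
    using assms(1) integral_count_space_nat[OF \<open>integrable _ (\<lambda>n. p n *\<^sub>R f n)\<close>]
    by (subst integral_density) auto
qed

definition khinchin_distr :: "(nat \<Rightarrow> real) \<Rightarrow> real \<Rightarrow> real measure" where
  "khinchin_distr a t = distr (density (count_space UNIV) (\<lambda>n. ennreal (kprob a t n))) borel
    (\<lambda>n. (real n - kmean a t) / ksd a t)"

context
  fixes a :: "nat \<Rightarrow> real" and t :: real
  assumes nonneg: "\<forall>n. 0 \<le> a n" and a0: "0 < a 0" and t: "0 < t" "ereal t < conv_radius a"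
begin

lemma kprob_nonneg: "0 \<le> kprob a t n"
  using nonneg t theta_ps_pos[where k=0, of a t 0] a0
  by (simp add: kprob_def ps_eq_theta_ps_0)

lemma kprob_sums_1: "kprob a t sums 1"
proof -
  have "0 < ps a t"
    using nonneg t theta_ps_pos[where k=0, of a t 0] a0 by (simp add: ps_eq_theta_ps_0)
  moreover have "(\<lambda>n. a n * t ^ n / ps a t) sums (ps a t / ps a t)"
    using sums_divide[OF theta_ps_sums[of t a 0], of "ps a t"] t by (simp add: ps_eq_theta_ps_0)
  ultimately show ?thesis by (simp add: kprob_def[abs_def])
qed

lemma summable_kprob_normalised_power:
  "summable (\<lambda>n. \<bar>kprob a t n * ((real n - kmean a t) / ksd a t) ^ k\<bar>)"
proof -
  have "summable (\<lambda>n. \<bar>a n * (real n - kmean a t) ^ k * t ^ n\<bar> / \<bar>ps a t * ksd a t ^ k\<bar>)"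
    using summable_abs_centered_ps t by (intro summable_divide) simp
  then show ?thesis
    by (simp add: kprob_def abs_mult abs_divide power_divide mult_ac)
qed

interpretation khinchin: prob_space "density (count_space UNIV) (\<lambda>n. ennreal (kprob a t n))"
  using prob_space_density_count_space kprob_nonneg kprob_sums_1 by blast

lemma real_distribution_khinchin_distr: "real_distribution (khinchin_distr a t)"
  unfolding khinchin_distr_def by (rule khinchin.real_distribution_distr) simp

lemma integrable_khinchin_distr_power: "integrable (khinchin_distr a t) (\<lambda>x. x ^ k)"
  unfolding khinchin_distr_def
  by (subst integrable_distr_eq)
    (auto intro!: integrable_density_count_space kprob_nonneg summable_kprob_normalised_power)

lemma khinchin_distr_moment: "(LINT x|khinchin_distr a t. x ^ k) = knorm_moment a t k"
  unfolding khinchin_distr_def knorm_moment_def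
  by (subst integral_distr)
    (auto intro!: integral_density_count_space kprob_nonneg summable_kprob_normalised_power)

lemma cdf_khinchin_distr: "cdf (khinchin_distr a t) x = knorm_cdf a t x"
proof -
  interpret real_distribution "khinchin_distr a t" by (rule real_distribution_khinchin_distr)
  have "cdf (khinchin_distr a t) x = (LINT y|khinchin_distr a t. indicator {..x} y)"
    by (simp add: cdf_def)
  also have "\<dots> = (\<Sum>n. kprob a t n * indicator {..x} ((real n - kmean a t) / ksd a t))"
  proof -
    have "summable (\<lambda>n. \<bar>kprob a t n * indicator {..x} ((real n - kmean a t) / ksd a t)\<bar>)"
      by (rule summable_comparison_test'[OF sums_summable[OF kprob_sums_1]])
        (auto simp: kprob_nonneg indicator_def)
    then show ?thesis
      unfolding khinchin_distr_def
      by (subst integral_distr) (auto intro!: integral_density_count_space kprob_nonneg)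
  qed
  also have "\<dots> = knorm_cdf a t x"
    unfolding knorm_cdf_def by (intro suminf_cong) (simp add: indicator_def)
  finally show ?thesis .
qed

end

lemma isCont_cdf_std_normal: "isCont (cdf std_normal_distribution) x"
proof -
  interpret real_distribution std_normal_distribution by (rule real_dist_normal_dist)
  have "AE y in lborel. y \<in> {x} \<longrightarrow> std_normal_density y = 0"
    using AE_lborel_singleton[of x] by eventually_elim simp
  then have "{x} \<in> null_sets std_normal_distribution"
    by (subst null_sets_density_iff) auto
  then show ?thesis by (simp add: isCont_cdf null_sets_def measure_def)
qed

lemma cdf_tendsto_std_normal_if_char_tendsto:
  fixes M :: "real \<Rightarrow> real measure"
  assumes "0 < r" and distr: "eventually (\<lambda>t. real_distribution (M t)) (upto r)"
    and char: "\<And>\<theta>. ((\<lambda>t. char (M t) \<theta>) \<longlongrightarrow> char std_normal_distribution \<theta>) (upto r)"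
  shows "((\<lambda>t. cdf (M t) x) \<longlongrightarrow> std_normal_cdf x) (upto r)"
proof (rule tendsto_upto_sequentially[OF \<open>0 < r\<close>])
  fix X assume X: "filterlim X (upto r) sequentially"
  text \<open>Levy's continuity theorem needs a real distribution at every index.\<close>
  define N where "N n = (if real_distribution (M (X n)) then M (X n) else std_normal_distribution)" for n
  have "eventually (\<lambda>n. real_distribution (M (X n))) sequentially"
    using filterlim_iff[THEN iffD1, OF X, rule_format, OF distr] .
  then have N: "eventually (\<lambda>n. N n = M (X n)) sequentially"
    by eventually_elim (simp add: N_def)
  have "real_distribution (N n)" for n
    using real_dist_normal_dist by (simp add: N_def)
  moreover have "(\<lambda>n. char (N n) \<theta>) \<longlonglongrightarrow> char std_normal_distribution \<theta>" for \<theta>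
    by (rule tendsto_cong[THEN iffD1, rotated, OF filterlim_compose[OF char X]])
      (use N in \<open>auto elim: eventually_mono\<close>)
  ultimately have "weak_conv_m N std_normal_distribution"
    by (intro levy_continuity real_dist_normal_dist)
  then have "(\<lambda>n. cdf (N n) x) \<longlonglongrightarrow> std_normal_cdf x"
    using isCont_cdf_std_normal by (simp add: weak_conv_m_def weak_conv_def std_normal_cdf_def cdf_def)
  then show "(\<lambda>n. cdf (M (X n)) x) \<longlonglongrightarrow> std_normal_cdf x"
    by (rule tendsto_cong[THEN iffD1, rotated]) (use N in \<open>auto elim!: eventually_mono\<close>)
qed

lemma gaussian_if_knorm_moments_tendsto:
  assumes nonneg: "\<forall>n. 0 \<le> a n" and "0 < a 0" and radius: "0 < conv_radius a"
    and moments: "\<And>k. ((\<lambda>t. knorm_moment a t k) \<longlongrightarrow> (LINT x|std_normal_distribution. x ^ k))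
      (upto (conv_radius a))"
  shows "gaussian a"
  unfolding gaussian_def
proof
  fix x
  let ?F = "upto (conv_radius a)"
  note in_disc = eventually_upto_in_disc[OF radius]
  have distr: "eventually (\<lambda>t. real_distribution (khinchin_distr a t)) ?F"
    using in_disc by eventually_elim (use nonneg \<open>0 < a 0\<close> real_distribution_khinchin_distr in blast)
  have "((\<lambda>t. char (khinchin_distr a t) \<theta>) \<longlongrightarrow> char std_normal_distribution \<theta>) ?F" for \<theta>
  proof (rule char_tendsto_std_normal_if_moments_tendsto[OF distr])
    show "eventually (\<lambda>t. integrable (khinchin_distr a t) (\<lambda>x. x ^ k)) ?F" for k
      using in_disc by eventually_elim (use nonneg \<open>0 < a 0\<close> integrable_khinchin_distr_power in blast)
    show "((\<lambda>t. LINT x|khinchin_distr a t. x ^ k) \<longlongrightarrow> (LINT x|std_normal_distribution. x ^ k)) ?F" for k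
      by (rule tendsto_cong[THEN iffD1, rotated, OF moments[of k]])
        (use in_disc nonneg \<open>0 < a 0\<close> khinchin_distr_moment in \<open>auto elim!: eventually_mono\<close>)
  qed
  then have "((\<lambda>t. cdf (khinchin_distr a t) x) \<longlongrightarrow> std_normal_cdf x) ?F"
    by (rule cdf_tendsto_std_normal_if_char_tendsto[OF radius distr])
  then show "((\<lambda>t. knorm_cdf a t x) \<longlongrightarrow> std_normal_cdf x) ?F"
    by (rule tendsto_cong[THEN iffD1, rotated])
      (use in_disc nonneg \<open>0 < a 0\<close> cdf_khinchin_distr in \<open>auto elim!: eventually_mono\<close>)
qed

section \<open>The fulcrum\<close>

lemma higher_deriv_ps_exp:
  assumes "ereal (exp s) < conv_radius c"
  shows "(deriv ^^ k) (\<lambda>s. ps c (exp s)) s = theta_ps c k (exp s)"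
  using assms
proof (induction k arbitrary: s)
  case 0
  then show ?case by (simp add: ps_eq_theta_ps_0)
next
  case (Suc k)
  have "open {s::real. ereal (exp s) < conv_radius c}"
    by (rule open_Collect_less) (auto intro!: continuous_intros continuous_on_ereal)
  then have "eventually (\<lambda>y. ereal (exp y) < conv_radius c) (nhds s)"
    using eventually_nhds_in_open Suc.prems by fastforce
  then have "eventually (\<lambda>y. (deriv ^^ k) (\<lambda>s. ps c (exp s)) y = theta_ps c k (exp y)) (nhds s)"
    by (rule eventually_mono) (rule Suc.IH)
  then have "deriv ((deriv ^^ k) (\<lambda>s. ps c (exp s))) s = deriv (\<lambda>y. theta_ps c k (exp y)) s"
    by (rule deriv_cong_ev) simp
  also have "\<dots> = theta_ps c (Suc k) (exp s)"
    by (rule DERIV_imp_deriv[OF has_real_derivative_theta_ps_exp[OF Suc.prems]])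
  finally show ?case by simp
qed

lemma powr_half_eq_sqrt_power: "0 < x \<Longrightarrow> x powr (real k / 2) = sqrt x ^ k"
  by (simp add: powr_half_sqrt[symmetric] powr_realpow[symmetric] powr_powr)

context clan_exponent
begin

lemma fulcrum_ratio_tendsto_0:
  assumes "3 \<le> k"
  shows "((\<lambda>s. (deriv ^^ k) (\<lambda>s. ps b (exp s)) s / ((deriv ^^ 2) (\<lambda>s. ps b (exp s)) s) powr (real k / 2))
    \<longlongrightarrow> 0) (upto_ln (conv_radius b))"
proof -
  have exp: "filterlim exp (upto (conv_radius b)) (upto_ln (conv_radius b))"
    by (rule filterlim_exp_upto_ln[OF radius])
  have "eventually (\<lambda>s. 0 < exp s \<and> ereal (exp s) < conv_radius b) (upto_ln (conv_radius b))"
    using filterlim_iff[THEN iffD1, OF exp, rule_format, OF eventually_upto_in_disc[OF radius]] .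
  then have "eventually (\<lambda>s. theta_ps b k (exp s) / sqrt (theta_ps b 2 (exp s)) ^ k
      = (deriv ^^ k) (\<lambda>s. ps b (exp s)) s / ((deriv ^^ 2) (\<lambda>s. ps b (exp s)) s) powr (real k / 2))
      (upto_ln (conv_radius b))"
    by eventually_elim (simp add: higher_deriv_ps_exp powr_half_eq_sqrt_power theta_ps_pos_nonconst)
  then show ?thesis
    by (rule tendsto_cong[THEN iffD1, rotated, OF filterlim_compose[OF theta_ps_ratio_tendsto_0[OF assms] exp]])
qed

end

theorem theorem4p13:
  fixes b :: "nat \<Rightarrow> real"
  assumes nonneg: "\<forall>n. b n \<ge> 0"
    and nonconst: "\<exists>n>0. b n \<noteq> 0"
    and radius: "conv_radius b > 0"
    and clan: "is_clan b"
    and g_infty: "filterlim (ps b) at_top (upto (conv_radius b))"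
  shows "(\<forall>k::nat. k \<ge> 3 \<longrightarrow>
           ((\<lambda>s. (deriv ^^ k) (\<lambda>s. ps b (exp s)) s
                 / ((deriv ^^ 2) (\<lambda>s. ps b (exp s)) s) powr (real k / 2))
             \<longlongrightarrow> 0) (upto_ln (conv_radius b)))
       \<and> (\<forall>m::nat. m \<ge> 1 \<longrightarrow>
           ((\<lambda>t. knorm_moment (exp_coeffs b) t m)
             \<longlongrightarrow> (LINT x|std_normal_distribution. x ^ m)) (upto (conv_radius b)))
       \<and> gaussian (exp_coeffs b)"
proof -
  interpret clan_exponent b
    by unfold_locales (use assms in auto)
  have "gaussian (exp_coeffs b)"
    by (rule gaussian_if_knorm_moments_tendsto)
      (simp_all add: exp_coeffs_nonneg nonneg conv_radius_exp_coeffs radius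
        knorm_moment_exp_coeffs_tendsto)
  then show ?thesis
    using fulcrum_ratio_tendsto_0 knorm_moment_exp_coeffs_tendsto by blast
qed

end
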